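(* Let $s\ge2$ and $n\ge1$ be integers and $r_\pm=s\left(1\pm\sqrt{1-1/s}\right)$. Then $$\dim\ker(H_n^s)=\sum_{k=0}^n|T_k|=\frac{r_+^{n+1}+r_-^{n+1}-2}{2(s-1)},$$ and asymptotically $\dim\ker(H_n^s)\approx r_+^{n+1}/[2(s-1)]$ (the ratio tends to $1$ as $n\to\infty$).
   Context: Let $\Sigma=\{-s,\dots,s\}$, $\Sigma_*=\Sigma\setminus\{0\}$. The spin chain on $n$ sites has local space $\mathbb{C}^{2s+1}$ with basis $\{|j\rangle:j\in\Sigma\}$. For $m\in\Sigma_*$, $P^m=|\phi_m\rangle\langle\phi_m|$ with $|\phi_m\rangle=\frac1{\sqrt2}(|0,m\rangle-|m,0\rangle)$; for $m\in\{1,\dots,s\}$, $Q^m=|\chi_m\rangle\langle\chi_m|$ with $|\chi_m\rangle=\frac1{\sqrt2}(|0,0\rangle-|m,-m\rangle)$, acting on two neighboring spins. $H_n^s=\sum_{k=1}^{n-1}\big(\sum_{m\in\Sigma_*}P^m_{k,k+1}+\sum_{m=1}^sQ^m_{k,k+1}\big)$. For $k\ge0$, $T_k\subseteq\Sigma_*^k$ is the set of strings $t_1\cdots t_k$ with no index $j$ such that $t_j=m\in\{1,\dots,s\}$ and $t_{j+1}=-m$ ($T_0$ consists of the empty string). *)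

theory Defs
  imports "HOL-Analysis.Analysis" "Jordan_Normal_Form.Matrix_Kernel"
begin

text \<open>Local dimension 2s+1; basis vectors of the n-site chain are indexed by
  i < (2s+1)^n, the spin at site k (k = 0..n-1) being the k-th base-(2s+1) digit minus s.\<close>

definition ldim :: "nat \<Rightarrow> nat" where "ldim s = 2 * s + 1"

definition spin :: "nat \<Rightarrow> nat \<Rightarrow> nat \<Rightarrow> int" where
  "spin s i k = int ((i div ldim s ^ k) mod ldim s) - int s"

definition Sigma_star :: "nat \<Rightarrow> int set" where
  "Sigma_star s = {- int s .. int s} - {0}"

definition kd :: "int \<Rightarrow> int \<Rightarrow> complex" where "kd a b = (if a = b then 1 else 0)"

definition phi :: "int \<Rightarrow> int \<Rightarrow> int \<Rightarrow> complex" where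
  "phi m x y = (kd x 0 * kd y m - kd x m * kd y 0) / complex_of_real (sqrt 2)"

definition chi :: "int \<Rightarrow> int \<Rightarrow> int \<Rightarrow> complex" where
  "chi m x y = (kd x 0 * kd y 0 - kd x m * kd y (-m)) / complex_of_real (sqrt 2)"

text \<open>Matrix element <x,y| (sum_m P^m + sum_{m=1}^s Q^m) |x',y'>.\<close>
definition hloc :: "nat \<Rightarrow> int \<Rightarrow> int \<Rightarrow> int \<Rightarrow> int \<Rightarrow> complex" where
  "hloc s x y x' y' =
     (\<Sum>m\<in>Sigma_star s. phi m x y * cnj (phi m x' y'))
   + (\<Sum>m\<in>{1..int s}. chi m x y * cnj (chi m x' y'))"

definition Ham :: "nat \<Rightarrow> nat \<Rightarrow> complex mat" where
  "Ham s n = mat (ldim s ^ n) (ldim s ^ n) (\<lambda>(i, j).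
     \<Sum>k<n - 1. (if (\<forall>l<n. l \<noteq> k \<and> l \<noteq> k + 1 \<longrightarrow> spin s i l = spin s j l)
                 then hloc s (spin s i k) (spin s i (k+1)) (spin s j k) (spin s j (k+1))
                 else 0))"

definition T :: "nat \<Rightarrow> nat \<Rightarrow> int list set" where
  "T s k = {t. length t = k \<and> set t \<subseteq> Sigma_star s \<and>
     \<not> (\<exists>j. j + 1 < k \<and> t ! j \<in> {1 .. int s} \<and> t ! (j + 1) = - (t ! j))}"

end

theory Submission
  imports Defs
begin

text \<open>The Hamiltonian is a sum of rank-one projectors onto the bond states \<open>\<phi>\<^sub>m\<close> and
  \<open>\<chi>\<^sub>m\<close>, so \<open>\<langle>\<psi>, H \<psi>\<rangle>\<close> is a sum of squared bond overlaps, and \<open>\<psi>\<close> lies in the kernel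
  iff all overlaps vanish, i.e. iff its amplitudes are invariant under the local moves
  \<open>0 m \<leftrightarrow> m 0\<close> (\<open>m \<noteq> 0\<close>) and \<open>0 0 \<leftrightarrow> m (-m)\<close> (\<open>m > 0\<close>). Deleting the zeros of a
  configuration and cancelling adjacent pairs \<open>m (-m)\<close> with \<open>m > 0\<close> yields a reduced word, which
  is a complete invariant of these moves. Hence the kernel dimension is the number of reduced
  words of length at most \<open>n\<close>, i.e. \<open>\<Sum>k\<le>n. |T k|\<close>. Splitting a reduced word by its first
  letter gives \<open>|T (k+2)| = 2s |T (k+1)| - s |T k|\<close>, a linear recurrence with characteristic
  roots \<open>r\<^sub>+\<close> and \<open>r\<^sub>-\<close>; summing its closed form gives the formula and the asymptotics.\<close>

section \<open>Reduced words\<close>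

lemma successively_iff_nth:
  "successively P xs \<longleftrightarrow> (\<forall>j. Suc j < length xs \<longrightarrow> P (xs ! j) (xs ! Suc j))"
proof (induction P xs rule: successively.induct)
  case (3 P x y xs)
  have "(\<forall>j. Suc j < length (x # y # xs) \<longrightarrow> P ((x # y # xs) ! j) ((x # y # xs) ! Suc j)) \<longleftrightarrow>
        P x y \<and> (\<forall>j. Suc j < length (y # xs) \<longrightarrow> P ((y # xs) ! j) ((y # xs) ! Suc j))"
    by (auto simp: All_less_Suc2 simp del: length_Cons)
  then show ?case using "3.IH" by simp
qed simp_all

definition spins :: "nat \<Rightarrow> int set" where
  "spins s = {- int s .. int s}"

definition configs :: "nat \<Rightarrow> nat \<Rightarrow> int list set" where
  "configs s n = {xs. length xs = n \<and> set xs \<subseteq> spins s}"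

definition cancels :: "int \<Rightarrow> int \<Rightarrow> bool" where
  "cancels x y \<longleftrightarrow> 0 < x \<and> y = - x"

abbreviation reduced :: "int list \<Rightarrow> bool" where
  "reduced \<equiv> successively (\<lambda>x y. \<not> cancels x y)"

fun cons_reduced :: "int \<Rightarrow> int list \<Rightarrow> int list" where
  "cons_reduced x [] = [x]"
| "cons_reduced x (y # ys) = (if cancels x y then ys else x # y # ys)"

fun reduce :: "int list \<Rightarrow> int list" where
  "reduce [] = []"
| "reduce (x # xs) = (if x = 0 then reduce xs else cons_reduced x (reduce xs))"

definition pad :: "nat \<Rightarrow> int list \<Rightarrow> int list" where
  "pad n w = w @ replicate (n - length w) 0"

lemma Sigma_star_eq: "Sigma_star s = spins s - {0}"
  unfolding Sigma_star_def spins_def by auto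

lemma finite_Sigma_star: "finite (Sigma_star s)"
  unfolding Sigma_star_def by simp

lemma card_Sigma_star: "card (Sigma_star s) = 2 * s"
proof -
  have "Sigma_star s = {- int s..-1} \<union> {1..int s}"
    unfolding Sigma_star_def by auto
  then have "card (Sigma_star s) = card {- int s..-1} + card {1..int s}"
    by (simp add: card_Un_disjoint)
  then show ?thesis by simp
qed

lemma T_eq_reduced: "T s k = {t. length t = k \<and> set t \<subseteq> Sigma_star s \<and> reduced t}"
proof -
  have "t ! j \<in> {1..int s} \<longleftrightarrow> 0 < t ! j" if "set t \<subseteq> Sigma_star s" "j < length t" for t j
  proof -
    have "t ! j \<in> Sigma_star s" using that by (meson nth_mem subsetD)
    then show ?thesis unfolding Sigma_star_def by auto
  qed
  then show ?thesis
    unfolding T_def successively_iff_nth cancels_def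
    by (auto simp del: One_nat_def) (metis Suc_lessD add.commute plus_1_eq_Suc)+
qed

lemma reduce_append_cong: "reduce u = reduce v \<Longrightarrow> reduce (pre @ u) = reduce (pre @ v)"
  by (induction pre) auto

lemma reduce_swap_zero: "m \<noteq> 0 \<Longrightarrow> reduce (pre @ [0, m] @ post) = reduce (pre @ [m, 0] @ post)"
  by (rule reduce_append_cong) auto

lemma reduce_cancel_pair: "0 < m \<Longrightarrow> reduce (pre @ [0, 0] @ post) = reduce (pre @ [m, - m] @ post)"
proof (rule reduce_append_cong)
  assume "0 < m"
  then have "cons_reduced (- m) w = - m # w" for w
    by (cases w) (auto simp: cancels_def)
  with \<open>0 < m\<close> show "reduce ([0, 0] @ post) = reduce ([m, - m] @ post)"
    by (cases "reduce post") (auto simp: cancels_def)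
qed

lemma cons_reduced_eq_Cons: "\<not> (w \<noteq> [] \<and> cancels x (hd w)) \<Longrightarrow> cons_reduced x w = x # w"
  by (cases w) auto

lemma reduced_cons_reduced: "reduced w \<Longrightarrow> reduced (cons_reduced x w)"
  by (cases w) (auto simp: successively_Cons)

lemma set_cons_reduced: "set (cons_reduced x w) \<subseteq> insert x (set w)"
  by (cases w) auto

lemma length_cons_reduced: "length (cons_reduced x w) \<le> Suc (length w)"
  by (cases w) auto

lemma reduced_reduce: "reduced (reduce xs)"
  by (induction xs) (auto intro: reduced_cons_reduced)

lemma set_reduce: "set (reduce xs) \<subseteq> set xs - {0}"
proof (induction xs)
  case (Cons x xs)
  then show ?case using set_cons_reduced[of x "reduce xs"] by auto
qed simp

lemma length_reduce: "length (reduce xs) \<le> length xs"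
proof (induction xs)
  case (Cons x xs)
  then show ?case using length_cons_reduced[of x "reduce xs"] by auto
qed simp

lemma reduce_reduced: "reduced w \<Longrightarrow> 0 \<notin> set w \<Longrightarrow> reduce w = w"
  by (induction w) (auto simp: successively_Cons cons_reduced_eq_Cons)

lemma reduce_pad: "reduced w \<Longrightarrow> 0 \<notin> set w \<Longrightarrow> reduce (pad n w) = w"
proof -
  have "reduce (replicate j 0) = []" for j
    by (induction j) auto
  then show "reduced w \<Longrightarrow> 0 \<notin> set w \<Longrightarrow> reduce (pad n w) = w"
    unfolding pad_def using reduce_append_cong[of _ "[]" w] reduce_reduced by simp
qed

section \<open>Functions invariant under local moves\<close>

definition move_invariant :: "nat \<Rightarrow> nat \<Rightarrow> (int list \<Rightarrow> 'a) \<Rightarrow> bool" where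
  "move_invariant s n f \<longleftrightarrow>
     (\<forall>pre post. length pre + length post + 2 = n \<and> set pre \<subseteq> spins s \<and> set post \<subseteq> spins s \<longrightarrow>
        (\<forall>m\<in>Sigma_star s. f (pre @ [0, m] @ post) = f (pre @ [m, 0] @ post)) \<and>
        (\<forall>m\<in>{1..int s}. f (pre @ [0, 0] @ post) = f (pre @ [m, - m] @ post)))"

lemma move_invariant_swap_zero:
  assumes "move_invariant s n f" "length pre + length post + 2 = n"
    and "set pre \<subseteq> spins s" "set post \<subseteq> spins s" "m \<in> Sigma_star s"
  shows "f (pre @ [0, m] @ post) = f (pre @ [m, 0] @ post)"
  using assms unfolding move_invariant_def by blast

lemma move_invariant_cancel_pair:
  assumes "move_invariant s n f" "length pre + length post + 2 = n"
    and "set pre \<subseteq> spins s" "set post \<subseteq> spins s" "m \<in> {1..int s}"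
  shows "f (pre @ [0, 0] @ post) = f (pre @ [m, - m] @ post)"
  using assms unfolding move_invariant_def by blast

lemma move_invariant_Cons:
  "move_invariant s (Suc n) f \<Longrightarrow> x \<in> spins s \<Longrightarrow> move_invariant s n (\<lambda>ys. f (x # ys))"
  unfolding move_invariant_def
  by (intro allI impI) (drule spec[of _ "x # _"], auto)

lemma move_invariant_zero_past:
  assumes f: "move_invariant s n f" and w: "set w \<subseteq> Sigma_star s"
    and pre: "set pre \<subseteq> spins s" and post: "set post \<subseteq> spins s"
    and n: "length pre + length w + length post + 1 = n"
  shows "f (pre @ 0 # w @ post) = f (pre @ w @ 0 # post)"
  using w pre n
proof (induction w arbitrary: pre)
  case (Cons y w)
  have y: "y \<in> spins s" "y \<in> Sigma_star s" and w': "set w \<subseteq> Sigma_star s"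
    using Cons.prems unfolding Sigma_star_eq by auto
  have "set (w @ post) \<subseteq> spins s"
    using w' post unfolding Sigma_star_eq by auto
  then have "f (pre @ [0, y] @ w @ post) = f (pre @ [y, 0] @ w @ post)"
    using Cons.prems by (intro move_invariant_swap_zero[OF f _ _ _ y(2)]) auto
  also have "\<dots> = f ((pre @ [y]) @ w @ 0 # post)"
    using Cons.IH[OF w', of "pre @ [y]"] Cons.prems y by simp
  finally show ?case by simp
qed simp

lemma move_invariant_zeros_past:
  assumes f: "move_invariant s n f" and w: "set w \<subseteq> Sigma_star s"
    and pre: "set pre \<subseteq> spins s" and post: "set post \<subseteq> spins s"
    and n: "length pre + j + length w + length post = n"
  shows "f (pre @ replicate j 0 @ w @ post) = f (pre @ w @ replicate j 0 @ post)"
  using pre n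
proof (induction j arbitrary: pre)
  case (Suc j)
  have zero: "0 \<in> spins s" and post': "set (replicate j 0 @ post) \<subseteq> spins s"
    using post unfolding spins_def by auto
  have "f (pre @ replicate (Suc j) 0 @ w @ post) = f ((pre @ [0]) @ replicate j 0 @ w @ post)"
    by (simp add: replicate_app_Cons_same)
  also have "\<dots> = f (pre @ 0 # w @ replicate j 0 @ post)"
    using Suc.IH[of "pre @ [0]"] Suc.prems zero by simp
  also have "\<dots> = f (pre @ w @ 0 # replicate j 0 @ post)"
    using move_invariant_zero_past[OF f w Suc.prems(1) post'] Suc.prems(2) by simp
  finally show ?case by (simp add: replicate_app_Cons_same)
qed simp

lemma move_invariant_replicate_pad:
  assumes f: "move_invariant s n f" and w: "set w \<subseteq> Sigma_star s" and n: "length w + j \<le> n"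
  shows "f (replicate j 0 @ pad (n - j) w) = f (pad n w)"
proof -
  define zeros where "zeros = replicate (n - j - length w) (0::int)"
  have "f ([] @ replicate j 0 @ w @ zeros) = f ([] @ w @ replicate j 0 @ zeros)"
    by (rule move_invariant_zeros_past[OF f w]) (use n in \<open>auto simp: zeros_def spins_def\<close>)
  moreover have "replicate j 0 @ zeros = replicate (n - length w) (0::int)"
    using n unfolding zeros_def by (simp add: replicate_add[symmetric])
  ultimately show ?thesis
    unfolding pad_def zeros_def by (simp add: diff_commute)
qed

lemma move_invariant_pad_reduce:
  assumes "move_invariant s n f" and "xs \<in> configs s n"
  shows "f xs = f (pad n (reduce xs))"
  using assms
proof (induction xs arbitrary: n f)
  case Nil
  then show ?case by (simp add: configs_def pad_def)
next
  case (Cons x xs)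
  then obtain n' where n: "n = Suc n'" and xs: "xs \<in> configs s n'" and x: "x \<in> spins s"
    unfolding configs_def by (cases n) auto
  define w where "w = reduce xs"
  have w: "set w \<subseteq> Sigma_star s" "length w \<le> n'"
    using set_reduce[of xs] length_reduce[of xs] xs unfolding w_def configs_def Sigma_star_eq by auto
  note replicate_pad = move_invariant_replicate_pad[OF Cons.prems(1)]
  have "f (x # xs) = f (x # pad n' w)"
    using Cons.IH[OF move_invariant_Cons[OF Cons.prems(1)[unfolded n] x] xs] unfolding w_def by simp
  also have "\<dots> = f (pad n (reduce (x # xs)))"
  proof -
    consider (zero) "x = 0" | (cancel) w' where "x \<noteq> 0" "cancels x (- x)" "w = - x # w'"
      | (keep) "x \<noteq> 0" "\<not> (w \<noteq> [] \<and> cancels x (hd w))"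
      by (metis cancels_def list.collapse)
    then show ?thesis
    proof cases
      case zero
      then show ?thesis
        using replicate_pad[OF w(1), of 1] w(2) unfolding n w_def by simp
    next
      case cancel
      have w': "set w' \<subseteq> Sigma_star s" "length w' + 2 \<le> n"
        using w n cancel by auto
      have "x \<in> {1..int s}"
        using x cancel unfolding cancels_def spins_def by auto
      moreover have "set (pad (n - 2) w') \<subseteq> spins s"
        using w' unfolding pad_def Sigma_star_eq spins_def by auto
      ultimately have "f ([] @ [0, 0] @ pad (n - 2) w') = f ([] @ [x, - x] @ pad (n - 2) w')"
        using w' by (intro move_invariant_cancel_pair[OF Cons.prems(1)]) (auto simp: pad_def)
      then have "f (x # pad n' w) = f (replicate 2 0 @ pad (n - 2) w')"
        using cancel unfolding n pad_def by (simp add: numeral_2_eq_2)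
      also have "\<dots> = f (pad n w')"
        by (rule replicate_pad[OF w'])
      finally show ?thesis
        using cancel unfolding w_def by simp
    qed (simp add: cons_reduced_eq_Cons pad_def n w_def Suc_diff_le w(2))
  qed
  finally show ?case .
qed

lemma move_invariant_iff_reduce_invariant:
  "move_invariant s n f \<longleftrightarrow>
     (\<forall>xs\<in>configs s n. \<forall>ys\<in>configs s n. reduce xs = reduce ys \<longrightarrow> f xs = f ys)"
proof
  assume "move_invariant s n f"
  then show "\<forall>xs\<in>configs s n. \<forall>ys\<in>configs s n. reduce xs = reduce ys \<longrightarrow> f xs = f ys"
    by (metis move_invariant_pad_reduce)
next
  assume inv: "\<forall>xs\<in>configs s n. \<forall>ys\<in>configs s n. reduce xs = reduce ys \<longrightarrow> f xs = f ys"
  show "move_invariant s n f"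
    unfolding move_invariant_def
  proof (intro allI impI conjI ballI)
    fix pre post :: "int list" and m
    assume "length pre + length post + 2 = n \<and> set pre \<subseteq> spins s \<and> set post \<subseteq> spins s"
    then have cfg: "pre @ [a, b] @ post \<in> configs s n" if "a \<in> spins s" "b \<in> spins s" for a b
      using that unfolding configs_def by auto
    have zero: "0 \<in> spins s" unfolding spins_def by simp
    show "f (pre @ [0, m] @ post) = f (pre @ [m, 0] @ post)" if "m \<in> Sigma_star s"
      using inv that cfg zero reduce_swap_zero[of m pre post] unfolding Sigma_star_eq by blast
    show "f (pre @ [0, 0] @ post) = f (pre @ [m, - m] @ post)" if m: "m \<in> {1..int s}"
    proof -
      have "m \<in> spins s" "- m \<in> spins s" "0 < m" using m unfolding spins_def by auto
      then show ?thesis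
        using inv zero cfg reduce_cancel_pair[of m pre post] by blast
    qed
  qed
qed

section \<open>Counting reduced words\<close>

lemma finite_T: "finite (T s k)"
proof (rule finite_subset)
  show "T s k \<subseteq> {t. set t \<subseteq> Sigma_star s \<and> length t = k}"
    unfolding T_eq_reduced by auto
qed (rule finite_lists_length_eq[OF finite_Sigma_star])

lemma T_0: "T s 0 = {[]}"
  unfolding T_eq_reduced by auto

lemma T_Suc:
  "T s (Suc k) = (\<Union>x\<in>Sigma_star s. (#) x ` {t \<in> T s k. \<not> (t \<noteq> [] \<and> cancels x (hd t))})"
proof (intro equalityI subsetI)
  fix t assume "t \<in> T s (Suc k)"
  then obtain x t' where "t = x # t'" "x \<in> Sigma_star s" "t' \<in> T s k"
      "\<not> (t' \<noteq> [] \<and> cancels x (hd t'))"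
    unfolding T_eq_reduced by (auto simp: successively_Cons length_Suc_conv)
  then show "t \<in> (\<Union>x\<in>Sigma_star s. (#) x ` {t \<in> T s k. \<not> (t \<noteq> [] \<and> cancels x (hd t))})"
    by blast
qed (auto simp: T_eq_reduced successively_Cons)

lemma card_T_Suc:
  "card (T s (Suc k)) = (\<Sum>x\<in>Sigma_star s. card {t \<in> T s k. \<not> (t \<noteq> [] \<and> cancels x (hd t))})"
  unfolding T_Suc by (subst card_UN_disjoint) (auto simp: finite_Sigma_star finite_T card_image)

lemma card_T_1: "card (T s 1) = 2 * s"
proof -
  have "{t \<in> T s 0. \<not> (t \<noteq> [] \<and> cancels x (hd t))} = {[]}" for x
    by (auto simp: T_0)
  then show ?thesis
    using card_T_Suc[of s 0] by (simp add: card_Sigma_star)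
qed

lemma card_T_Suc_Suc: "card (T s (Suc (Suc k))) + s * card (T s k) = 2 * s * card (T s (Suc k))"
proof -
  define A where "A x = {t \<in> T s (Suc k). \<not> (t \<noteq> [] \<and> cancels x (hd t))}" for x
  have neg: "card (A x) = card (T s (Suc k))" if "x < 0" for x
    using that unfolding A_def cancels_def by simp
  have pos: "card (A x) + card (T s k) = card (T s (Suc k))" if x: "x \<in> {1..int s}" for x
  proof -
    have "- x \<in> Sigma_star s" using x unfolding Sigma_star_def by auto
    then have "T s (Suc k) = A x \<union> (#) (- x) ` T s k"
      using x unfolding A_def T_eq_reduced cancels_def
      by (auto simp: successively_Cons length_Suc_conv)
    moreover have "A x \<inter> (#) (- x) ` T s k = {}"
      using x unfolding A_def cancels_def by auto
    ultimately show ?thesis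
      using finite_T[of s "Suc k"] finite_T[of s k] by (simp add: card_Un_disjoint card_image)
  qed
  have "Sigma_star s = {- int s..-1} \<union> {1..int s}"
    unfolding Sigma_star_def by auto
  then have "card (T s (Suc (Suc k))) = (\<Sum>x\<in>{- int s..-1}. card (A x)) + (\<Sum>x\<in>{1..int s}. card (A x))"
    unfolding card_T_Suc A_def by (simp add: sum.union_disjoint)
  also have "(\<Sum>x\<in>{- int s..-1}. card (A x)) = s * card (T s (Suc k))"
    using neg by simp
  finally have "card (T s (Suc (Suc k))) + s * card (T s k) =
      s * card (T s (Suc k)) + (\<Sum>x\<in>{1..int s}. card (A x) + card (T s k))"
    by (simp add: sum.distrib)
  also have "(\<Sum>x\<in>{1..int s}. card (A x) + card (T s k)) = s * card (T s (Suc k))"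
    using pos by simp
  finally show ?thesis by simp
qed

lemma reduce_image_configs: "reduce ` configs s n = (\<Union>k\<in>{0..n}. T s k)"
proof (intro equalityI subsetI)
  fix t assume "t \<in> reduce ` configs s n"
  then obtain xs where "xs \<in> configs s n" "t = reduce xs" by blast
  then show "t \<in> (\<Union>k\<in>{0..n}. T s k)"
    using reduced_reduce[of xs] set_reduce[of xs] length_reduce[of xs]
    unfolding configs_def T_eq_reduced Sigma_star_eq by auto
next
  fix t assume "t \<in> (\<Union>k\<in>{0..n}. T s k)"
  then have t: "length t \<le> n" "set t \<subseteq> Sigma_star s" "reduced t"
    unfolding T_eq_reduced by auto
  then have "pad n t \<in> configs s n" "reduce (pad n t) = t"
    using reduce_pad[of t n] unfolding pad_def configs_def Sigma_star_eq spins_def by auto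
  then show "t \<in> reduce ` configs s n" by (metis image_eqI)
qed

lemma card_reduce_image_configs: "card (reduce ` configs s n) = (\<Sum>k=0..n. card (T s k))"
  unfolding reduce_image_configs
  by (rule card_UN_disjoint) (use finite_T in \<open>auto simp: T_eq_reduced\<close>)

section \<open>Second-order linear recurrences\<close>

lemma linear_recurrence_closed_form:
  fixes a b :: "'a::comm_ring_1" and c :: "nat \<Rightarrow> 'a"
  assumes "c 0 = 1" "c 1 = a + b"
    and "\<And>k. c (Suc (Suc k)) = (a + b) * c (Suc k) - a * b * c k"
  shows "c k * (a - b) = a ^ Suc k - b ^ Suc k"
proof (induction k rule: induct_nat_012)
  case (ge2 k)
  have "c (Suc (Suc k)) * (a - b) = (a + b) * (c (Suc k) * (a - b)) - a * b * (c k * (a - b))"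
    by (simp add: assms(3) algebra_simps)
  also have "\<dots> = a ^ Suc (Suc (Suc k)) - b ^ Suc (Suc (Suc k))"
    by (simp only: ge2) (simp add: algebra_simps)
  finally show ?case .
qed (simp_all add: assms(1) assms(2)[unfolded One_nat_def] algebra_simps)

lemma sum_linear_recurrence_closed_form:
  fixes a b S :: real and c :: "nat \<Rightarrow> real"
  assumes sum: "a + b = 2 * S" and prod: "a * b = S" and "a \<noteq> b"
    and c: "\<And>k. c k * (a - b) = a ^ Suc k - b ^ Suc k"
  shows "2 * (S - 1) * (\<Sum>k=0..n. c k) = a ^ Suc n + b ^ Suc n - 2"
proof (induction n)
  case 0
  then show ?case using c[of 0] \<open>a \<noteq> b\<close> sum by simp
next
  case (Suc n)
  \<comment> \<open>Since \<open>a + b = 2 a b\<close>, both roots satisfy \<open>2 (S - 1) r = \<plusminus>(r - 1) (a - b)\<close>.\<close>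
  have vanish: "a + b - 2 * S = 0" "a + b - 2 * (a * b) = 0"
    using sum prod by simp_all
  have "2 * (S - 1) * a = (a - 1) * (a - b) - ((a + b - 2 * S) * a + (a + b - 2 * (a * b)))"
    "2 * (S - 1) * b = - (b - 1) * (a - b) - ((a + b - 2 * S) * b + (a + b - 2 * (a * b)))"
    by (simp_all add: algebra_simps)
  then have roots: "2 * (S - 1) * a = (a - 1) * (a - b)" "2 * (S - 1) * b = - (b - 1) * (a - b)"
    unfolding vanish by simp_all
  have "2 * (S - 1) * c (Suc n) * (a - b) = 2 * (S - 1) * (c (Suc n) * (a - b))"
    by (simp only: mult.assoc)
  also have "\<dots> = a ^ Suc n * (2 * (S - 1) * a) - b ^ Suc n * (2 * (S - 1) * b)"
    unfolding c by (simp add: algebra_simps)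
  also have "\<dots> = (a ^ Suc (Suc n) + b ^ Suc (Suc n) - a ^ Suc n - b ^ Suc n) * (a - b)"
    unfolding roots by (simp add: algebra_simps)
  finally have "2 * (S - 1) * c (Suc n) = a ^ Suc (Suc n) + b ^ Suc (Suc n) - a ^ Suc n - b ^ Suc n"
    using \<open>a \<noteq> b\<close> by simp
  then show ?case using Suc.IH by (simp add: algebra_simps)
qed

lemma quadratic_roots:
  fixes s :: real
  assumes "1 < s"
  defines "rp \<equiv> s * (1 + sqrt (1 - 1 / s))" and "rm \<equiv> s * (1 - sqrt (1 - 1 / s))"
  shows "rp + rm = 2 * s" "rp * rm = s" "0 < rm" "rm < rp" "1 < rp"
proof -
  define q where "q = sqrt (1 - 1 / s)"
  have q: "0 < q" "q < 1" "q\<^sup>2 = 1 - 1 / s"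
    using assms(1) unfolding q_def by (auto simp: field_simps)
  show "rp + rm = 2 * s" unfolding rp_def rm_def by (simp add: algebra_simps)
  have "rp * rm = s * s * (1 - q\<^sup>2)"
    unfolding rp_def rm_def q_def[symmetric] by (simp add: power2_eq_square algebra_simps)
  then show "rp * rm = s" using assms(1) q(3) by (simp add: field_simps)
  have "0 < q * s" "q * s < s" using assms(1) q by simp_all
  moreover have "rp = s + q * s" "rm = s - q * s"
    unfolding rp_def rm_def q_def by (simp_all add: algebra_simps)
  ultimately show "0 < rm" "rm < rp" "1 < rp"
    using assms(1) by linarith+
qed

lemma ratio_tendsto_1:
  fixes a b :: real
  assumes "1 < a" "0 < b" "b < a"
  shows "(\<lambda>n. (a ^ Suc n + b ^ Suc n - 2) / a ^ Suc n) \<longlonglongrightarrow> 1"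
proof -
  have "(\<lambda>n. 1 + (b / a) ^ Suc n - 2 * (1 / a) ^ Suc n) \<longlonglongrightarrow> 1 + 0 - 2 * 0"
    using assms by (intro tendsto_intros LIMSEQ_Suc LIMSEQ_power_zero) auto
  moreover have "(a ^ Suc n + b ^ Suc n - 2) / a ^ Suc n = 1 + (b / a) ^ Suc n - 2 * (1 / a) ^ Suc n" for n
    using assms(1) by (simp add: field_simps power_divide)
  ultimately show ?thesis by simp
qed

section \<open>Kernels consisting of the vectors constant on fibres\<close>

definition fibre_indicator :: "nat \<Rightarrow> (nat \<Rightarrow> 'b) \<Rightarrow> 'b \<Rightarrow> 'a::zero_neq_one vec" where
  "fibre_indicator N g w = vec N (\<lambda>i. if g i = w then 1 else 0)"

lemma inj_on_fibre_indicator: "inj_on (fibre_indicator N g) (g ` {..<N})"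
proof (rule inj_onI)
  fix w w' assume "w \<in> g ` {..<N}" and eq: "fibre_indicator N g w = fibre_indicator N g w'"
  then obtain i where "i < N" "w = g i" by blast
  then show "w = w'"
    using arg_cong[OF eq, of "\<lambda>v. v $ i"] unfolding fibre_indicator_def by (simp split: if_splits)
qed

lemma (in kernel) lincomb_fibre_indicators_index:
  assumes "fibre_indicator nc g ` g ` {..<nc} \<subseteq> mat_kernel A" "i < nc"
  shows "lincomb a (fibre_indicator nc g ` g ` {..<nc}) $ i = a (fibre_indicator nc g (g i))"
proof -
  let ?e = "fibre_indicator nc g"
  have "lincomb a (?e ` g ` {..<nc}) $ i = (\<Sum>b\<in>?e ` g ` {..<nc}. a b * b $ i)"
    by (rule lincomb_index[OF assms(2,1)])
  also have "\<dots> = (\<Sum>w\<in>g ` {..<nc}. if w = g i then a (?e w) else 0)"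
    using assms(2) unfolding sum.reindex[OF inj_on_fibre_indicator]
    by (intro sum.cong) (auto simp: fibre_indicator_def)
  also have "\<dots> = a (?e (g i))"
    using assms(2) by simp
  finally show ?thesis .
qed

lemma kernel_dim_eq_card_image:
  fixes A :: "'a::field mat" and g :: "nat \<Rightarrow> 'b"
  assumes A: "A \<in> carrier_mat N N"
    and ker: "\<And>v. v \<in> mat_kernel A \<longleftrightarrow> dim_vec v = N \<and> (\<forall>i<N. \<forall>j<N. g i = g j \<longrightarrow> v $ i = v $ j)"
  shows "kernel_dim A = card (g ` {..<N})"
proof -
  interpret K: kernel N N A using A by unfold_locales
  define e :: "'b \<Rightarrow> 'a vec" where "e = fibre_indicator N g"
  define B where "B = e ` g ` {..<N}"
  have finB: "finite B" unfolding B_def by simp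
  have B_ker: "B \<subseteq> mat_kernel A"
    unfolding B_def e_def fibre_indicator_def using ker by auto
  have lincomb: "K.lincomb a B $ i = a (e (g i))" if "i < N" for a i
    using K.lincomb_fibre_indicators_index[OF B_ker[unfolded B_def e_def] that] unfolding B_def e_def .
  have "K.lin_indpt B"
  proof (rule K.Ker.finite_lin_indpt2[OF finB B_ker])
    fix a assume "a \<in> B \<rightarrow> UNIV" and zero: "K.lincomb a B = 0\<^sub>v N"
    show "\<forall>b\<in>B. a b = 0"
    proof
      fix b assume "b \<in> B"
      then obtain i where "i < N" "b = e (g i)" unfolding B_def by blast
      then show "a b = 0" using lincomb[of i a] zero by simp
    qed
  qed
  moreover have "mat_kernel A \<subseteq> K.span B"
  proof
    fix v assume v: "v \<in> mat_kernel A"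
    define a where "a b = v $ (SOME j. j < N \<and> e (g j) = b)" for b
    have "K.lincomb a B = v"
    proof (rule eq_vecI)
      show "dim_vec (K.lincomb a B) = dim_vec v"
        using K.Ker.lincomb_closed[OF B_ker] v ker by (metis Pi_UNIV UNIV_I)
      fix i assume "i < dim_vec v"
      then have i: "i < N" using v ker by simp
      then obtain j where j: "j < N" "e (g j) = e (g i)" "a (e (g i)) = v $ j"
        unfolding a_def by (metis (mono_tags, lifting) someI_ex)
      then have "g j = g i"
        using i inj_on_fibre_indicator[of N g] unfolding e_def by (auto dest: inj_onD)
      then show "K.lincomb a B $ i = v $ i"
        using lincomb[OF i] i j v ker by metis
    qed
    then show "v \<in> K.span B" using finB unfolding K.Ker.span_def by blast
  qed
  ultimately have "K.basis B"
    unfolding K.Ker.basis_def using B_ker K.Ker.span_is_subset2[OF B_ker] by auto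
  then have "kernel_dim A = card B" using K.Ker.dim_basis[OF finB] by simp
  also have "\<dots> = card (g ` {..<N})"
    unfolding B_def e_def by (rule card_image[OF inj_on_fibre_indicator])
  finally show ?thesis .
qed

section \<open>The Hamiltonian acting on functions of configurations\<close>

definition config_of :: "nat \<Rightarrow> nat \<Rightarrow> nat \<Rightarrow> int list" where
  "config_of s n i = map (spin s i) [0..<n]"

fun index_of :: "nat \<Rightarrow> int list \<Rightarrow> nat" where
  "index_of s [] = 0"
| "index_of s (x # xs) = nat (x + int s) + ldim s * index_of s xs"

lemma spin_in_spins: "spin s i k \<in> spins s"
proof -
  have "(i div ldim s ^ k) mod ldim s < 2 * s + 1"
    unfolding ldim_def by simp
  then show ?thesis unfolding spin_def spins_def by auto
qed

lemma config_of_in_configs: "config_of s n i \<in> configs s n"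
  unfolding config_of_def configs_def using spin_in_spins by auto

lemma config_of_Suc: "config_of s (Suc n) i = spin s i 0 # config_of s n (i div ldim s)"
  unfolding config_of_def map_upt_Suc spin_def by (simp add: div_mult2_eq)

lemma index_of_config_of: "i < ldim s ^ n \<Longrightarrow> index_of s (config_of s n i) = i"
proof (induction n arbitrary: i)
  case 0
  then show ?case by (simp add: config_of_def)
next
  case (Suc n)
  then have "i div ldim s < ldim s ^ n"
    by (simp add: less_mult_imp_div_less mult.commute)
  with Suc.IH show ?case
    unfolding config_of_Suc spin_def by simp
qed

lemma config_of_index_of:
  "xs \<in> configs s n \<Longrightarrow> config_of s n (index_of s xs) = xs \<and> index_of s xs < ldim s ^ n"
proof (induction xs arbitrary: n)
  case Nil
  then show ?case by (simp add: configs_def config_of_def)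
next
  case (Cons x xs)
  then obtain n' where n: "n = Suc n'" and xs: "xs \<in> configs s n'" and x: "x \<in> spins s"
    unfolding configs_def by (cases n) auto
  define d where "d = nat (x + int s)"
  define e where "e = index_of s xs"
  have d: "d < ldim s" "int d - int s = x"
    using x unfolding d_def spins_def ldim_def by auto
  have IH: "config_of s n' e = xs" "e < ldim s ^ n'"
    using Cons.IH[OF xs] unfolding e_def by auto
  have "d + ldim s * e < ldim s * ldim s ^ n'"
  proof -
    have "ldim s * (e + 1) \<le> ldim s * ldim s ^ n'"
      using IH(2) by (intro mult_le_mono2) simp
    then show ?thesis using d(1) by simp
  qed
  moreover have "index_of s (x # xs) = d + ldim s * e"
    unfolding d_def e_def by simp
  ultimately show ?case
    using d IH(1) unfolding n config_of_Suc spin_def by simp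
qed

lemma bij_betw_config_of: "bij_betw (config_of s n) {..<ldim s ^ n} (configs s n)"
  by (rule bij_betw_byWitness[where f' = "index_of s"])
    (auto simp: index_of_config_of config_of_index_of config_of_in_configs)

lemma finite_configs: "finite (configs s n)"
  using bij_betw_finite[OF bij_betw_config_of] by simp

definition ham_coeff :: "nat \<Rightarrow> nat \<Rightarrow> int list \<Rightarrow> int list \<Rightarrow> complex" where
  "ham_coeff s n xs ys = (\<Sum>k<n - 1.
     if \<forall>l<n. l \<noteq> k \<and> l \<noteq> Suc k \<longrightarrow> xs ! l = ys ! l
     then hloc s (xs ! k) (xs ! Suc k) (ys ! k) (ys ! Suc k) else 0)"

definition ham_apply :: "nat \<Rightarrow> nat \<Rightarrow> (int list \<Rightarrow> complex) \<Rightarrow> int list \<Rightarrow> complex" where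
  "ham_apply s n f xs = (\<Sum>ys\<in>configs s n. ham_coeff s n xs ys * f ys)"

lemma Ham_carrier: "Ham s n \<in> carrier_mat (ldim s ^ n) (ldim s ^ n)"
  unfolding Ham_def by simp

lemma Ham_index:
  assumes "i < ldim s ^ n" "j < ldim s ^ n"
  shows "Ham s n $$ (i, j) = ham_coeff s n (config_of s n i) (config_of s n j)"
proof -
  have spins: "l < n \<Longrightarrow> config_of s n i ! l = spin s i l" "l < n \<Longrightarrow> config_of s n j ! l = spin s j l" for l
    unfolding config_of_def by auto
  then have agree: "(\<forall>l<n. l \<noteq> k \<and> l \<noteq> k + 1 \<longrightarrow> spin s i l = spin s j l) \<longleftrightarrow>
      (\<forall>l<n. l \<noteq> k \<and> l \<noteq> Suc k \<longrightarrow> config_of s n i ! l = config_of s n j ! l)" for k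
    by auto
  have bond: "hloc s (spin s i k) (spin s i (k + 1)) (spin s j k) (spin s j (k + 1)) =
      hloc s (config_of s n i ! k) (config_of s n i ! Suc k) (config_of s n j ! k) (config_of s n j ! Suc k)"
    if "k \<in> {..<n - 1}" for k
    using that spins[of k] spins[of "Suc k"] by simp
  have "Ham s n $$ (i, j) = (\<Sum>k<n - 1. if \<forall>l<n. l \<noteq> k \<and> l \<noteq> k + 1 \<longrightarrow> spin s i l = spin s j l
      then hloc s (spin s i k) (spin s i (k + 1)) (spin s j k) (spin s j (k + 1)) else 0)"
    using assms unfolding Ham_def by simp
  also have "\<dots> = ham_coeff s n (config_of s n i) (config_of s n j)"
    unfolding ham_coeff_def agree by (intro sum.cong refl) (simp only: bond)
  finally show ?thesis .
qed

lemma mult_mat_vec_Ham_index: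
  assumes "dim_vec v = ldim s ^ n" "i < ldim s ^ n"
  shows "(Ham s n *\<^sub>v v) $ i = ham_apply s n (\<lambda>ys. v $ index_of s ys) (config_of s n i)"
proof -
  have "(Ham s n *\<^sub>v v) $ i = (\<Sum>j<ldim s ^ n. Ham s n $$ (i, j) * v $ j)"
    using assms Ham_carrier[of s n] by (simp add: scalar_prod_def lessThan_atLeast0)
  also have "\<dots> = (\<Sum>j<ldim s ^ n. ham_coeff s n (config_of s n i) (config_of s n j) *
      v $ index_of s (config_of s n j))"
    using assms(2) by (intro sum.cong) (auto simp: Ham_index index_of_config_of)
  also have "\<dots> = ham_apply s n (\<lambda>ys. v $ index_of s ys) (config_of s n i)"
    unfolding ham_apply_def by (rule sum.reindex_bij_betw[OF bij_betw_config_of])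
  finally show ?thesis .
qed

lemma ball_configs_iff: "(\<forall>xs\<in>configs s n. P xs) \<longleftrightarrow> (\<forall>i<ldim s ^ n. P (config_of s n i))"
  unfolding bij_betw_imp_surj_on[OF bij_betw_config_of, symmetric] by auto

lemma mat_kernel_Ham_iff_ham_apply:
  "v \<in> mat_kernel (Ham s n) \<longleftrightarrow> dim_vec v = ldim s ^ n \<and>
     (\<forall>xs\<in>configs s n. ham_apply s n (\<lambda>ys. v $ index_of s ys) xs = 0)"
proof -
  have "v \<in> mat_kernel (Ham s n) \<longleftrightarrow> dim_vec v = ldim s ^ n \<and> Ham s n *\<^sub>v v = 0\<^sub>v (ldim s ^ n)"
    using Ham_carrier[of s n] unfolding mat_kernel_def carrier_dim_vec by auto
  moreover have "Ham s n *\<^sub>v v = 0\<^sub>v (ldim s ^ n) \<longleftrightarrow> (\<forall>i<ldim s ^ n. (Ham s n *\<^sub>v v) $ i = 0)"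
    using Ham_carrier[of s n] by (simp add: vec_eq_iff)
  moreover have "dim_vec v = ldim s ^ n \<Longrightarrow> (\<forall>i<ldim s ^ n. (Ham s n *\<^sub>v v) $ i = 0) \<longleftrightarrow>
      (\<forall>i<ldim s ^ n. ham_apply s n (\<lambda>ys. v $ index_of s ys) (config_of s n i) = 0)"
    using mult_mat_vec_Ham_index by simp
  ultimately show ?thesis
    unfolding ball_configs_iff by blast
qed

lemma update_bond_in_configs:
  "xs \<in> configs s n \<Longrightarrow> a \<in> spins s \<Longrightarrow> b \<in> spins s \<Longrightarrow> xs[k := a, Suc k := b] \<in> configs s n"
  unfolding configs_def by (auto dest!: subsetD[OF set_update_subset_insert])

lemma update_bond_eq_append:
  "Suc k < length xs \<Longrightarrow> xs[k := a, Suc k := b] = take k xs @ [a, b] @ drop (Suc (Suc k)) xs"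
  by (simp add: upd_conv_take_nth_drop list_update_append min_def)

lemma eq_update_bond_if_agree_off_bond:
  assumes "length ys = length xs" "\<forall>l<length xs. l \<noteq> k \<and> l \<noteq> Suc k \<longrightarrow> xs ! l = ys ! l"
  shows "ys = xs[k := ys ! k, Suc k := ys ! Suc k]"
proof (rule nth_equalityI)
  fix i assume "i < length ys"
  then show "ys ! i = xs[k := ys ! k, Suc k := ys ! Suc k] ! i"
    using assms by (cases "i = k"; cases "i = Suc k") (auto simp: nth_list_update)
qed (use assms in simp)

lemma configs_agreeing_off_bond:
  assumes xs: "xs \<in> configs s n" and k: "Suc k < n"
  shows "{ys \<in> configs s n. \<forall>l<n. l \<noteq> k \<and> l \<noteq> Suc k \<longrightarrow> xs ! l = ys ! l} =
    (\<lambda>(a, b). xs[k := a, Suc k := b]) ` (spins s \<times> spins s)"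
proof (intro equalityI subsetI)
  fix ys assume "ys \<in> {ys \<in> configs s n. \<forall>l<n. l \<noteq> k \<and> l \<noteq> Suc k \<longrightarrow> xs ! l = ys ! l}"
  then have ys: "ys \<in> configs s n" "\<forall>l<n. l \<noteq> k \<and> l \<noteq> Suc k \<longrightarrow> xs ! l = ys ! l"
    by auto
  have "ys ! k \<in> set ys" "ys ! Suc k \<in> set ys"
    using ys(1) k unfolding configs_def by simp_all
  then have "ys ! k \<in> spins s" "ys ! Suc k \<in> spins s"
    using ys(1) unfolding configs_def by auto
  moreover have "ys = xs[k := ys ! k, Suc k := ys ! Suc k]"
    using xs ys unfolding configs_def by (intro eq_update_bond_if_agree_off_bond) auto
  ultimately show "ys \<in> (\<lambda>(a, b). xs[k := a, Suc k := b]) ` (spins s \<times> spins s)"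
    by (metis (no_types, lifting) case_prod_conv image_eqI mem_Sigma_iff)
qed (use xs update_bond_in_configs in \<open>auto simp: nth_list_update\<close>)

lemma inj_on_update_bond:
  assumes "Suc k < length xs"
  shows "inj_on (\<lambda>(a, b). xs[k := a, Suc k := b]) A"
proof (rule inj_onI, clarify)
  fix a b a' b' assume "xs[k := a, Suc k := b] = xs[k := a', Suc k := b']"
  then have "xs[k := a, Suc k := b] ! k = xs[k := a', Suc k := b'] ! k"
    "xs[k := a, Suc k := b] ! Suc k = xs[k := a', Suc k := b'] ! Suc k"
    by simp_all
  then show "a = a' \<and> b = b'" using assms by simp
qed

lemma sum_configs_agreeing_off_bond:
  assumes xs: "xs \<in> configs s n" and k: "Suc k < n"
  shows "(\<Sum>ys\<in>configs s n. if \<forall>l<n. l \<noteq> k \<and> l \<noteq> Suc k \<longrightarrow> xs ! l = ys ! l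
            then h (ys ! k) (ys ! Suc k) * f ys else 0) =
         (\<Sum>a\<in>spins s. \<Sum>b\<in>spins s. h a b * f (xs[k := a, Suc k := b]))"
proof -
  have len: "Suc k < length xs" using xs k unfolding configs_def by simp
  have "(\<Sum>ys\<in>configs s n. if \<forall>l<n. l \<noteq> k \<and> l \<noteq> Suc k \<longrightarrow> xs ! l = ys ! l
            then h (ys ! k) (ys ! Suc k) * f ys else 0) =
        (\<Sum>ys\<in>(\<lambda>(a, b). xs[k := a, Suc k := b]) ` (spins s \<times> spins s). h (ys ! k) (ys ! Suc k) * f ys)"
    unfolding configs_agreeing_off_bond[OF xs k, symmetric]
    by (rule sum.inter_filter[OF finite_configs, symmetric])
  also have "\<dots> = (\<Sum>(a, b)\<in>spins s \<times> spins s. h a b * f (xs[k := a, Suc k := b]))"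
    using len by (subst sum.reindex[OF inj_on_update_bond[OF len]]) (auto intro!: sum.cong)
  also have "\<dots> = (\<Sum>a\<in>spins s. \<Sum>b\<in>spins s. h a b * f (xs[k := a, Suc k := b]))"
    by (rule sum.cartesian_product[symmetric])
  finally show ?thesis .
qed

lemma ham_apply_eq_sum_bonds:
  assumes "xs \<in> configs s n"
  shows "ham_apply s n f xs = (\<Sum>k<n - 1. \<Sum>a\<in>spins s. \<Sum>b\<in>spins s.
            hloc s (xs ! k) (xs ! Suc k) a b * f (xs[k := a, Suc k := b]))"
proof -
  have "ham_apply s n f xs = (\<Sum>k<n - 1. \<Sum>ys\<in>configs s n.
      if \<forall>l<n. l \<noteq> k \<and> l \<noteq> Suc k \<longrightarrow> xs ! l = ys ! l
      then hloc s (xs ! k) (xs ! Suc k) (ys ! k) (ys ! Suc k) * f ys else 0)"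
    unfolding ham_apply_def ham_coeff_def sum_distrib_right
    by (subst sum.swap) (auto intro!: sum.cong)
  also have "\<dots> = (\<Sum>k<n - 1. \<Sum>a\<in>spins s. \<Sum>b\<in>spins s.
            hloc s (xs ! k) (xs ! Suc k) a b * f (xs[k := a, Suc k := b]))"
  proof (rule sum.cong[OF refl])
    fix k assume "k \<in> {..<n - 1}"
    then show "(\<Sum>ys\<in>configs s n. if \<forall>l<n. l \<noteq> k \<and> l \<noteq> Suc k \<longrightarrow> xs ! l = ys ! l
        then hloc s (xs ! k) (xs ! Suc k) (ys ! k) (ys ! Suc k) * f ys else 0) =
      (\<Sum>a\<in>spins s. \<Sum>b\<in>spins s. hloc s (xs ! k) (xs ! Suc k) a b * f (xs[k := a, Suc k := b]))"
      using sum_configs_agreeing_off_bond[OF assms, of k "hloc s (xs ! k) (xs ! Suc k)"] by simp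
  qed
  finally show ?thesis .
qed

section \<open>Bond overlaps and the kernel\<close>

text \<open>For real coefficients \<open>u\<close>, \<open>overlap s u f xs k\<close> is the inner product of the bond state
  \<open>u\<close> on sites \<open>k, k + 1\<close> with \<open>f\<close>, the remaining spins being fixed as in \<open>xs\<close>.\<close>

definition overlap :: "nat \<Rightarrow> (int \<Rightarrow> int \<Rightarrow> complex) \<Rightarrow> (int list \<Rightarrow> complex) \<Rightarrow> int list \<Rightarrow> nat \<Rightarrow> complex"
  where "overlap s u f xs k = (\<Sum>a\<in>spins s. \<Sum>b\<in>spins s. u a b * f (xs[k := a, Suc k := b]))"

definition bond_term :: "nat \<Rightarrow> (int list \<Rightarrow> complex) \<Rightarrow> int list \<Rightarrow> nat \<Rightarrow> complex" where
  "bond_term s f xs k =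
     (\<Sum>m\<in>Sigma_star s. phi m (xs ! k) (xs ! Suc k) * overlap s (phi m) f xs k)
   + (\<Sum>m\<in>{1..int s}. chi m (xs ! k) (xs ! Suc k) * overlap s (chi m) f xs k)"

definition bond_energy :: "nat \<Rightarrow> (int list \<Rightarrow> complex) \<Rightarrow> int list \<Rightarrow> nat \<Rightarrow> real" where
  "bond_energy s f xs k =
     (\<Sum>m\<in>Sigma_star s. (cmod (overlap s (phi m) f xs k))\<^sup>2)
   + (\<Sum>m\<in>{1..int s}. (cmod (overlap s (chi m) f xs k))\<^sup>2)"

lemma cnj_phi [simp]: "cnj (phi m a b) = phi m a b"
  unfolding phi_def kd_def by simp

lemma cnj_chi [simp]: "cnj (chi m a b) = chi m a b"
  unfolding chi_def kd_def by simp

lemma sum_sum_mult_sum_swap: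
  fixes c :: "'i \<Rightarrow> 'j \<Rightarrow> 'a::comm_semiring_0"
  shows "(\<Sum>a\<in>A. \<Sum>b\<in>B. c a b * (\<Sum>m\<in>M. u m a b * p m)) = (\<Sum>m\<in>M. p m * (\<Sum>a\<in>A. \<Sum>b\<in>B. u m a b * c a b))"
proof -
  have "(\<Sum>a\<in>A. \<Sum>b\<in>B. c a b * (\<Sum>m\<in>M. u m a b * p m)) = (\<Sum>a\<in>A. \<Sum>b\<in>B. \<Sum>m\<in>M. p m * (u m a b * c a b))"
    by (simp add: sum_distrib_left mult_ac)
  also have "\<dots> = (\<Sum>a\<in>A. \<Sum>m\<in>M. \<Sum>b\<in>B. p m * (u m a b * c a b))"
    by (rule sum.cong[OF refl], rule sum.swap)
  also have "\<dots> = (\<Sum>m\<in>M. p m * (\<Sum>a\<in>A. \<Sum>b\<in>B. u m a b * c a b))"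
    by (subst sum.swap) (simp add: sum_distrib_left)
  finally show ?thesis .
qed

lemma hloc_sum:
  "(\<Sum>a\<in>spins s. \<Sum>b\<in>spins s. hloc s x y a b * g a b) =
     (\<Sum>m\<in>Sigma_star s. phi m x y * (\<Sum>a\<in>spins s. \<Sum>b\<in>spins s. phi m a b * g a b))
   + (\<Sum>m\<in>{1..int s}. chi m x y * (\<Sum>a\<in>spins s. \<Sum>b\<in>spins s. chi m a b * g a b))"
proof -
  have "hloc s x y a b * g a b =
      g a b * (\<Sum>m\<in>Sigma_star s. phi m a b * phi m x y) + g a b * (\<Sum>m\<in>{1..int s}. chi m a b * chi m x y)"
    for a b unfolding hloc_def by (simp add: distrib_left distrib_right mult.commute)
  then show ?thesis
    by (simp only: sum.distrib sum_sum_mult_sum_swap)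
qed

lemma sum_kd_kd:
  assumes "finite A" "a0 \<in> A" "b0 \<in> A"
  shows "(\<Sum>a\<in>A. \<Sum>b\<in>A. kd a a0 * kd b b0 * g a b) = g a0 b0"
proof -
  have "(\<Sum>b\<in>A. kd a a0 * kd b b0 * g a b) = (\<Sum>b\<in>A. if b = b0 then kd a a0 * g a b else 0)" for a
    by (intro sum.cong) (auto simp: kd_def)
  then have "(\<Sum>a\<in>A. \<Sum>b\<in>A. kd a a0 * kd b b0 * g a b) = (\<Sum>a\<in>A. if a = a0 then g a b0 else 0)"
    using assms by (intro sum.cong) (auto simp: kd_def)
  then show ?thesis using assms by simp
qed

lemma sum_sum_diff_divide:
  "(\<Sum>a\<in>A. \<Sum>b\<in>B. (x a b - y a b) / (r::complex)) = ((\<Sum>a\<in>A. \<Sum>b\<in>B. x a b) - (\<Sum>a\<in>A. \<Sum>b\<in>B. y a b)) / r"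
  by (simp only: sum_divide_distrib[symmetric] sum_subtractf)

lemma overlap_phi:
  assumes "m \<in> spins s"
  shows "overlap s (phi m) f xs k = (f (xs[k := 0, Suc k := m]) - f (xs[k := m, Suc k := 0])) / sqrt 2"
proof -
  have "0 \<in> spins s" "finite (spins s)" unfolding spins_def by auto
  moreover have "phi m a b * f (xs[k := a, Suc k := b]) =
      (kd a 0 * kd b m * f (xs[k := a, Suc k := b]) - kd a m * kd b 0 * f (xs[k := a, Suc k := b])) / sqrt 2"
    for a b unfolding phi_def by (simp add: left_diff_distrib)
  ultimately show ?thesis
    using assms unfolding overlap_def by (simp only: sum_sum_diff_divide sum_kd_kd)
qed

lemma overlap_chi:
  assumes "m \<in> spins s" "- m \<in> spins s"
  shows "overlap s (chi m) f xs k = (f (xs[k := 0, Suc k := 0]) - f (xs[k := m, Suc k := - m])) / sqrt 2"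
proof -
  have "0 \<in> spins s" "finite (spins s)" unfolding spins_def by auto
  moreover have "chi m a b * f (xs[k := a, Suc k := b]) =
      (kd a 0 * kd b 0 * f (xs[k := a, Suc k := b]) - kd a m * kd b (- m) * f (xs[k := a, Suc k := b])) / sqrt 2"
    for a b unfolding chi_def by (simp add: left_diff_distrib)
  ultimately show ?thesis
    using assms unfolding overlap_def by (simp only: sum_sum_diff_divide sum_kd_kd)
qed

lemma ham_apply_eq_sum_bond_term:
  "xs \<in> configs s n \<Longrightarrow> ham_apply s n f xs = (\<Sum>k<n - 1. bond_term s f xs k)"
  unfolding ham_apply_eq_sum_bonds bond_term_def overlap_def hloc_sum ..

lemma update_bond_update_bond: "xs[k := a, Suc k := b, k := c, Suc k := d] = xs[k := c, Suc k := d]"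
  by (metis list_update_overwrite list_update_swap n_not_Suc_n)

lemma overlap_update_bond: "overlap s u f (xs[k := a, Suc k := b]) k = overlap s u f xs k"
  unfolding overlap_def update_bond_update_bond ..

lemma sum_mult_cnj_overlap:
  assumes "\<And>a b. cnj (u a b) = u a b"
  shows "(\<Sum>a\<in>spins s. \<Sum>b\<in>spins s. u a b * cnj (f (xs[k := a, Suc k := b]))) = cnj (overlap s u f xs k)"
  unfolding overlap_def by (simp add: assms)

lemma sum_cnj_mult_bond_term:
  assumes "Suc k < length zs"
  shows "(\<Sum>a\<in>spins s. \<Sum>b\<in>spins s. cnj (f (zs[k := a, Suc k := b])) * bond_term s f (zs[k := a, Suc k := b]) k)
    = of_real (bond_energy s f zs k)"
proof -
  let ?P = "\<lambda>m. overlap s (phi m) f zs k" and ?C = "\<lambda>m. overlap s (chi m) f zs k"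
  have "bond_term s f (zs[k := a, Suc k := b]) k =
      (\<Sum>m\<in>Sigma_star s. phi m a b * ?P m) + (\<Sum>m\<in>{1..int s}. chi m a b * ?C m)" for a b
    using assms unfolding bond_term_def overlap_update_bond by simp
  then have "(\<Sum>a\<in>spins s. \<Sum>b\<in>spins s. cnj (f (zs[k := a, Suc k := b])) * bond_term s f (zs[k := a, Suc k := b]) k)
    = (\<Sum>m\<in>Sigma_star s. ?P m * cnj (?P m)) + (\<Sum>m\<in>{1..int s}. ?C m * cnj (?C m))"
    by (simp add: distrib_left sum.distrib sum_sum_mult_sum_swap sum_mult_cnj_overlap)
  then show ?thesis
    unfolding bond_energy_def of_real_add of_real_sum complex_norm_square .
qed

definition vacant_configs :: "nat \<Rightarrow> nat \<Rightarrow> nat \<Rightarrow> int list set" where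
  "vacant_configs s n k = {zs \<in> configs s n. zs ! k = 0 \<and> zs ! Suc k = 0}"

lemma sum_configs_by_bond:
  assumes k: "Suc k < n"
  shows "(\<Sum>xs\<in>configs s n. F xs) =
    (\<Sum>zs\<in>vacant_configs s n k. \<Sum>a\<in>spins s. \<Sum>b\<in>spins s. F (zs[k := a, Suc k := b]))"
proof -
  have zero: "0 \<in> spins s" unfolding spins_def by simp
  have "(\<Sum>xs\<in>configs s n. F xs) =
      (\<Sum>(zs, a, b)\<in>vacant_configs s n k \<times> spins s \<times> spins s. F (zs[k := a, Suc k := b]))"
  proof (rule sum.reindex_bij_witness[where i = "\<lambda>(zs, a, b). zs[k := a, Suc k := b]"
        and j = "\<lambda>xs. (xs[k := 0, Suc k := 0], xs ! k, xs ! Suc k)"])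
    fix xs assume xs: "xs \<in> configs s n"
    then have "xs ! k \<in> set xs" "xs ! Suc k \<in> set xs" using k unfolding configs_def by simp_all
    then show "(xs[k := 0, Suc k := 0], xs ! k, xs ! Suc k) \<in> vacant_configs s n k \<times> spins s \<times> spins s"
      using xs k zero update_bond_in_configs unfolding vacant_configs_def configs_def
      by (auto simp: nth_list_update)
    show "(\<lambda>(zs, a, b). zs[k := a, Suc k := b]) (xs[k := 0, Suc k := 0], xs ! k, xs ! Suc k) = xs"
      by (simp add: update_bond_update_bond)
  next
    fix p assume "p \<in> vacant_configs s n k \<times> spins s \<times> spins s"
    then obtain zs a b where p: "p = (zs, a, b)" "zs \<in> configs s n" "zs ! k = 0" "zs ! Suc k = 0"
        "a \<in> spins s" "b \<in> spins s"
      unfolding vacant_configs_def by auto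
    moreover have "length zs = n" using p(2) unfolding configs_def by simp
    moreover have "zs[k := 0, Suc k := 0] = zs" using p(3,4) by (metis list_update_id)
    ultimately show "(\<lambda>xs. (xs[k := 0, Suc k := 0], xs ! k, xs ! Suc k)) ((\<lambda>(zs, a, b). zs[k := a, Suc k := b]) p) = p"
      using k by (auto simp: update_bond_update_bond nth_list_update list_update_id)
    show "(\<lambda>(zs, a, b). zs[k := a, Suc k := b]) p \<in> configs s n"
      using p update_bond_in_configs by simp
  qed (simp add: update_bond_update_bond)
  then show ?thesis
    by (simp add: sum.cartesian_product)
qed

lemma bond_energy_nonneg: "0 \<le> bond_energy s f xs k"
  unfolding bond_energy_def by (intro add_nonneg_nonneg sum_nonneg) auto

lemma ham_quadratic_form:
  "(\<Sum>xs\<in>configs s n. cnj (f xs) * ham_apply s n f xs) =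
     of_real (\<Sum>k<n - 1. \<Sum>zs\<in>vacant_configs s n k. bond_energy s f zs k)"
proof -
  have "(\<Sum>xs\<in>configs s n. cnj (f xs) * ham_apply s n f xs) =
      (\<Sum>k<n - 1. \<Sum>xs\<in>configs s n. cnj (f xs) * bond_term s f xs k)"
    by (simp add: ham_apply_eq_sum_bond_term sum_distrib_left) (rule sum.swap)
  also have "\<dots> = (\<Sum>k<n - 1. of_real (\<Sum>zs\<in>vacant_configs s n k. bond_energy s f zs k))"
  proof (rule sum.cong[OF refl])
    fix k assume "k \<in> {..<n - 1}"
    then have k: "Suc k < n" by simp
    have "length zs = n" if "zs \<in> vacant_configs s n k" for zs
      using that unfolding vacant_configs_def configs_def by simp
    then show "(\<Sum>xs\<in>configs s n. cnj (f xs) * bond_term s f xs k) =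
        of_real (\<Sum>zs\<in>vacant_configs s n k. bond_energy s f zs k)"
      unfolding sum_configs_by_bond[OF k] using k by (simp add: sum_cnj_mult_bond_term)
  qed
  finally show ?thesis by simp
qed

lemma bond_energy_eq_0_iff:
  "bond_energy s f xs k = 0 \<longleftrightarrow>
     (\<forall>m\<in>Sigma_star s. overlap s (phi m) f xs k = 0) \<and> (\<forall>m\<in>{1..int s}. overlap s (chi m) f xs k = 0)"
  unfolding bond_energy_def
  by (simp add: add_nonneg_eq_0_iff sum_nonneg sum_nonneg_eq_0_iff finite_Sigma_star)

lemma bond_energy_eq_0_if_ham_annihilates:
  assumes H: "\<forall>xs\<in>configs s n. ham_apply s n f xs = 0" and xs: "xs \<in> configs s n" and k: "Suc k < n"
  shows "bond_energy s f xs k = 0"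
proof -
  define zs where "zs = xs[k := 0, Suc k := 0]"
  have "0 \<in> spins s" unfolding spins_def by simp
  then have zs: "zs \<in> vacant_configs s n k"
    using xs k update_bond_in_configs unfolding zs_def vacant_configs_def configs_def
    by (auto simp: nth_list_update)
  have finite_vacant: "finite (vacant_configs s n k')" for k'
    unfolding vacant_configs_def using finite_configs by simp
  have "(\<Sum>xs\<in>configs s n. cnj (f xs) * ham_apply s n f xs) = 0"
    using H by simp
  then have "complex_of_real (\<Sum>k<n - 1. \<Sum>zs\<in>vacant_configs s n k. bond_energy s f zs k) = 0"
    unfolding ham_quadratic_form .
  then have "(\<Sum>k<n - 1. \<Sum>zs\<in>vacant_configs s n k. bond_energy s f zs k) = 0"
    by (simp only: of_real_eq_0_iff)
  then have "bond_energy s f zs k = 0"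
    using k zs finite_vacant by (simp add: sum_nonneg_eq_0_iff bond_energy_nonneg sum_nonneg)
  then show ?thesis
    unfolding zs_def bond_energy_def overlap_update_bond .
qed

lemma bond_energy_eq_0_if_move_invariant:
  assumes f: "move_invariant s n f" and xs: "xs \<in> configs s n" and k: "Suc k < n"
  shows "bond_energy s f xs k = 0"
  unfolding bond_energy_eq_0_iff
proof (intro conjI ballI)
  define pre where "pre = take k xs"
  define post where "post = drop (Suc (Suc k)) xs"
  have split: "xs[k := a, Suc k := b] = pre @ [a, b] @ post" for a b
    using xs k unfolding pre_def post_def configs_def by (simp add: update_bond_eq_append)
  have pre_post: "length pre + length post + 2 = n" "set pre \<subseteq> spins s" "set post \<subseteq> spins s"
    using xs k set_take_subset[of k xs] set_drop_subset[of "Suc (Suc k)" xs]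
    unfolding pre_def post_def configs_def by auto
  show "overlap s (phi m) f xs k = 0" if "m \<in> Sigma_star s" for m
    using that move_invariant_swap_zero[OF f pre_post] unfolding Sigma_star_eq
    by (simp add: overlap_phi split)
  show "overlap s (chi m) f xs k = 0" if "m \<in> {1..int s}" for m
  proof -
    have "m \<in> spins s" "- m \<in> spins s" using that unfolding spins_def by auto
    then show ?thesis
      using that move_invariant_cancel_pair[OF f pre_post] by (simp add: overlap_chi split)
  qed
qed

lemma move_invariant_if_bond_energies_vanish:
  assumes vanish: "\<And>xs k. xs \<in> configs s n \<Longrightarrow> Suc k < n \<Longrightarrow> bond_energy s f xs k = 0"
  shows "move_invariant s n f"
  unfolding move_invariant_def
proof (intro allI impI conjI ballI)
  fix pre post :: "int list" and m
  assume pre_post: "length pre + length post + 2 = n \<and> set pre \<subseteq> spins s \<and> set post \<subseteq> spins s"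
  define xs where "xs = pre @ [0, 0] @ post"
  have "0 \<in> spins s" unfolding spins_def by simp
  then have "xs \<in> configs s n" "Suc (length pre) < n"
    using pre_post unfolding xs_def configs_def by auto
  then have vanish_xs: "\<forall>m\<in>Sigma_star s. overlap s (phi m) f xs (length pre) = 0"
    "\<forall>m\<in>{1..int s}. overlap s (chi m) f xs (length pre) = 0"
    using vanish bond_energy_eq_0_iff by blast+
  have split: "xs[length pre := a, Suc (length pre) := b] = pre @ [a, b] @ post" for a b
    unfolding xs_def by (simp add: list_update_append)
  show "f (pre @ [0, m] @ post) = f (pre @ [m, 0] @ post)" if "m \<in> Sigma_star s"
    using vanish_xs(1)[rule_format, OF that] that unfolding Sigma_star_eq
    by (simp add: overlap_phi split)
  show "f (pre @ [0, 0] @ post) = f (pre @ [m, - m] @ post)" if "m \<in> {1..int s}"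
  proof -
    have "m \<in> spins s" "- m \<in> spins s" using that unfolding spins_def by auto
    then show ?thesis using vanish_xs(2)[rule_format, OF that] by (simp add: overlap_chi split)
  qed
qed

lemma ham_annihilates_iff_move_invariant:
  "(\<forall>xs\<in>configs s n. ham_apply s n f xs = 0) \<longleftrightarrow> move_invariant s n f"
proof
  assume "\<forall>xs\<in>configs s n. ham_apply s n f xs = 0"
  then show "move_invariant s n f"
    by (intro move_invariant_if_bond_energies_vanish bond_energy_eq_0_if_ham_annihilates)
next
  assume f: "move_invariant s n f"
  show "\<forall>xs\<in>configs s n. ham_apply s n f xs = 0"
  proof
    fix xs assume xs: "xs \<in> configs s n"
    have "bond_term s f xs k = 0" if "k < n - 1" for k
      using bond_energy_eq_0_if_move_invariant[OF f xs, of k] that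
      unfolding bond_energy_eq_0_iff bond_term_def by simp
    then show "ham_apply s n f xs = 0"
      unfolding ham_apply_eq_sum_bond_term[OF xs] by simp
  qed
qed

lemma mat_kernel_Ham_iff:
  "v \<in> mat_kernel (Ham s n) \<longleftrightarrow> dim_vec v = ldim s ^ n \<and>
     (\<forall>i<ldim s ^ n. \<forall>j<ldim s ^ n. reduce (config_of s n i) = reduce (config_of s n j) \<longrightarrow> v $ i = v $ j)"
  unfolding mat_kernel_Ham_iff_ham_apply ham_annihilates_iff_move_invariant
    move_invariant_iff_reduce_invariant ball_configs_iff
  by (simp add: index_of_config_of)

lemma kernel_dim_Ham: "kernel_dim (Ham s n) = card (reduce ` configs s n)"
proof -
  have "kernel_dim (Ham s n) = card ((\<lambda>i. reduce (config_of s n i)) ` {..<ldim s ^ n})"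
    by (rule kernel_dim_eq_card_image[OF Ham_carrier mat_kernel_Ham_iff])
  also have "(\<lambda>i. reduce (config_of s n i)) ` {..<ldim s ^ n} = reduce ` configs s n"
    using bij_betw_imp_surj_on[OF bij_betw_config_of] by (metis image_image)
  finally show ?thesis .
qed

theorem corollary1:
  fixes s :: nat
  assumes "s \<ge> 2"
  defines "rp \<equiv> real s * (1 + sqrt (1 - 1 / real s))"
      and "rm \<equiv> real s * (1 - sqrt (1 - 1 / real s))"
  shows "(\<forall>n\<ge>1. kernel_dim (Ham s n) = (\<Sum>k=0..n. card (T s k)) \<and>
            real (kernel_dim (Ham s n)) = (rp ^ (n + 1) + rm ^ (n + 1) - 2) / (2 * (real s - 1)))
         \<and> (\<lambda>n. real (kernel_dim (Ham s n)) / (rp ^ (n + 1) / (2 * (real s - 1)))) \<longlonglongrightarrow> 1"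
proof -
  have s: "1 < real s" using assms(1) by simp
  note roots = quadratic_roots[OF s, folded rp_def rm_def]
  define c where "c k = real (card (T s k))" for k
  have c_closed: "c k * (rp - rm) = rp ^ Suc k - rm ^ Suc k" for k
  proof (rule linear_recurrence_closed_form)
    show "c 0 = 1" by (simp add: c_def T_0)
    show "c 1 = rp + rm" using roots(1) card_T_1[of s] by (simp add: c_def)
    show "c (Suc (Suc k)) = (rp + rm) * c (Suc k) - rp * rm * c k" for k
      using arg_cong[OF card_T_Suc_Suc[of s k], of real] roots(1,2) by (simp add: c_def algebra_simps)
  qed
  have dim: "kernel_dim (Ham s n) = (\<Sum>k=0..n. card (T s k))" for n
    by (simp add: kernel_dim_Ham card_reduce_image_configs)
  have closed: "real (kernel_dim (Ham s n)) = (rp ^ (n + 1) + rm ^ (n + 1) - 2) / (2 * (real s - 1))" for n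
    using sum_linear_recurrence_closed_form[OF roots(1,2) _ c_closed, of n] roots(4) s
    by (simp add: dim c_def field_simps)
  have "(\<lambda>n. real (kernel_dim (Ham s n)) / (rp ^ (n + 1) / (2 * (real s - 1)))) =
      (\<lambda>n. (rp ^ Suc n + rm ^ Suc n - 2) / rp ^ Suc n)"
    using s by (simp add: closed)
  with ratio_tendsto_1[OF roots(5,3,4)] dim closed show ?thesis by simp
qed

end
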